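(* Assume $\mathfrak g$ is noncompact and has no nonzero proper $\sigma$-stable ideals. Then every root $\alpha\in\Sigma$ with $\mathfrak k_\mathbb C(\mathfrak t,\alpha)\ne\{0\}$ can be written as $\alpha=\beta+\gamma$ with $\beta,\gamma\in\Sigma(\mathfrak m_\mathbb C,\mathfrak t)\cup\{0\}$.
   Context: Let $G$ be a connected real semisimple Lie group with Lie algebra $\mathfrak g$. Let $\sigma$ be an involution of $G$ and $\theta$ a Cartan involution with $\sigma\theta=\theta\sigma$; the same letters denote the induced involutions of $\mathfrak g$. Let $\mathfrak g=\mathfrak k\oplus\mathfrak m$ and $\mathfrak g=\mathfrak h\oplus\mathfrak q$ be the $\pm1$-eigenspace decompositions for $\theta$ and $\sigma$. Let $\mathfrak t$ be a maximal abelian subspace of $\mathfrak k\cap\mathfrak q$. For a linear form $\alpha:\mathfrak t\to i\mathbb R$ put - $\mathfrak g_\mathbb C(\mathfrak t,\alpha)=\{X\in\mathfrak g_\mathbb C\mid[Y,X]=\alpha(Y)X\ \forall Y\in\mathfrak t\}$, - $\mathfrak k_\mathbb C(\mathfrak t,\alpha)=\mathfrak g_\mathbb C(\mathfrak t,\alpha)\cap\mathfrak k_\mathbb C$, - $\mathfrak m_\mathbb C(\mathfrak t,\alpha)=\mathfrak g_\mathbb C(\mathfrak t,\alpha)\cap\mathfrak m_\mathbb C$. Let $\Sigma=\{\alpha\neq0\mid\mathfrak g_\mathbb C(\mathfrak t,\alpha)\ne\{0\}\}$ and $\Sigma(\mathfrak m_\mathbb C,\mathfrak t)=\{\alpha\ne0\mid\mathfrak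 m_\mathbb C(\mathfrak t,\alpha)\ne\{0\}\}$. *)

theory Defs
  imports "HOL-Analysis.Analysis"
begin

definition lie_algebra :: "('a::euclidean_space \<Rightarrow> 'a \<Rightarrow> 'a) \<Rightarrow> bool" where
  "lie_algebra br \<longleftrightarrow> bilinear br \<and> (\<forall>x. br x x = 0) \<and>
     (\<forall>x y z. br x (br y z) + br y (br z x) + br z (br x y) = 0)"

definition lie_ideal :: "('a::euclidean_space \<Rightarrow> 'a \<Rightarrow> 'a) \<Rightarrow> 'a set \<Rightarrow> bool" where
  "lie_ideal br I \<longleftrightarrow> subspace I \<and> (\<forall>x y. y \<in> I \<longrightarrow> br x y \<in> I)"

definition derived :: "('a::euclidean_space \<Rightarrow> 'a \<Rightarrow> 'a) \<Rightarrow> 'a set \<Rightarrow> 'a set" where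
  "derived br S = span {br x y | x y. x \<in> S \<and> y \<in> S}"

definition lie_solvable :: "('a::euclidean_space \<Rightarrow> 'a \<Rightarrow> 'a) \<Rightarrow> 'a set \<Rightarrow> bool" where
  "lie_solvable br I \<longleftrightarrow> (\<exists>n. (derived br ^^ n) I = {0})"

definition semisimple :: "('a::euclidean_space \<Rightarrow> 'a \<Rightarrow> 'a) \<Rightarrow> bool" where
  "semisimple br \<longleftrightarrow> lie_algebra br \<and>
     (\<forall>I. lie_ideal br I \<and> lie_solvable br I \<longrightarrow> I = {0})"

definition lie_aut :: "('a::euclidean_space \<Rightarrow> 'a \<Rightarrow> 'a) \<Rightarrow> ('a \<Rightarrow> 'a) \<Rightarrow> bool" where
  "lie_aut br f \<longleftrightarrow> linear f \<and> bij f \<and> (\<forall>x y. f (br x y) = br (f x) (f y))"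

definition lie_involution :: "('a::euclidean_space \<Rightarrow> 'a \<Rightarrow> 'a) \<Rightarrow> ('a \<Rightarrow> 'a) \<Rightarrow> bool" where
  "lie_involution br f \<longleftrightarrow> lie_aut br f \<and> (\<forall>x. f (f x) = x)"

definition trace_map :: "('a::euclidean_space \<Rightarrow> 'a) \<Rightarrow> real" where
  "trace_map f = (\<Sum>b\<in>Basis. f b \<bullet> b)"

definition killing :: "('a::euclidean_space \<Rightarrow> 'a \<Rightarrow> 'a) \<Rightarrow> 'a \<Rightarrow> 'a \<Rightarrow> real" where
  "killing br x y = trace_map (\<lambda>z. br x (br y z))"

definition cartan_involution :: "('a::euclidean_space \<Rightarrow> 'a \<Rightarrow> 'a) \<Rightarrow> ('a \<Rightarrow> 'a) \<Rightarrow> bool" where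
  "cartan_involution br \<theta> \<longleftrightarrow> lie_involution br \<theta> \<and>
     (\<forall>x. x \<noteq> 0 \<longrightarrow> - killing br x (\<theta> x) > 0)"

text \<open>A semisimple real Lie algebra is compact iff its Killing form is negative definite.\<close>
definition compact_lie :: "('a::euclidean_space \<Rightarrow> 'a \<Rightarrow> 'a) \<Rightarrow> bool" where
  "compact_lie br \<longleftrightarrow> (\<forall>x. x \<noteq> 0 \<longrightarrow> killing br x x < 0)"

definition plus_eig :: "('a::real_vector \<Rightarrow> 'a) \<Rightarrow> 'a set" where
  "plus_eig f = {x. f x = x}"

definition minus_eig :: "('a::real_vector \<Rightarrow> 'a) \<Rightarrow> 'a set" where
  "minus_eig f = {x. f x = - x}"

definition max_abelian_subspace ::
  "('a::euclidean_space \<Rightarrow> 'a \<Rightarrow> 'a) \<Rightarrow> 'a set \<Rightarrow> 'a set \<Rightarrow> bool" where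
  "max_abelian_subspace br t S \<longleftrightarrow>
     subspace t \<and> t \<subseteq> S \<and> (\<forall>x\<in>t. \<forall>y\<in>t. br x y = 0) \<and>
     (\<forall>u. subspace u \<and> t \<subseteq> u \<and> u \<subseteq> S \<and> (\<forall>x\<in>u. \<forall>y\<in>u. br x y = 0) \<longrightarrow> u = t)"

text \<open>Complexification g_C = g + i g, an element X1 + i X2 represented by the pair (X1, X2).
  A linear form alpha : t \<rightarrow> i\<real> is represented as alpha = i * lam with lam a real
  linear form (only its values on t matter).
  [Y, X1 + i X2] = i lam(Y) (X1 + i X2)  iff  [Y,X1] = -lam(Y) X2 and [Y,X2] = lam(Y) X1.
  The set V is the real subspace (g, k or m) whose complexification we intersect with.\<close>
definition weight_space ::
  "('a::euclidean_space \<Rightarrow> 'a \<Rightarrow> 'a) \<Rightarrow> 'a set \<Rightarrow> ('a \<Rightarrow> real) \<Rightarrow> 'a set \<Rightarrow> ('a \<times> 'a) set" where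
  "weight_space br t lam V =
     {(X1, X2). X1 \<in> V \<and> X2 \<in> V \<and>
        (\<forall>Y\<in>t. br Y X1 = - (lam Y *\<^sub>R X2) \<and> br Y X2 = lam Y *\<^sub>R X1)}"

definition is_root ::
  "('a::euclidean_space \<Rightarrow> 'a \<Rightarrow> 'a) \<Rightarrow> 'a set \<Rightarrow> ('a \<Rightarrow> real) \<Rightarrow> 'a set \<Rightarrow> bool" where
  "is_root br t lam V \<longleftrightarrow> (\<exists>Y\<in>t. lam Y \<noteq> 0) \<and> (\<exists>X\<in>weight_space br t lam V. X \<noteq> (0, 0))"

end

theory Submission
  imports Defs
begin

text \<open>
  Write \<open>k\<close>, \<open>m\<close> for the eigenspaces of \<open>\<theta>\<close> and \<open>B\<^sub>\<theta>(x, y) = -B(x, \<theta> y)\<close> for the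
  positive definite form given by the Cartan involution; for \<open>Y \<in> t \<subseteq> k\<close> the map \<open>ad Y\<close> is
  \<open>B\<^sub>\<theta>\<close>-skew. The operators \<open>ad Y ad Z\<close> (\<open>Y, Z \<in> t\<close>) are then symmetric and commute with
  \<open>ad t\<close>, so by Schur's lemma they act by scalars on every minimal \<open>t\<close>-invariant subspace of
  \<open>m\<close>. This yields vectors \<open>u, u' \<in> m\<close> with \<open>[Y, u] = \<nu>(Y) u'\<close> and \<open>[Y, u'] = -\<nu>(Y) u\<close>, i.e.
  real and imaginary parts of weight vectors of \<open>m\<^sub>\<complex>\<close>, and such \<open>u\<close> span \<open>m\<close> by an
  orthogonal complement argument. Since \<open>g\<close> is noncompact and has no proper \<open>\<sigma>\<close>-stable
  ideals, the ideal \<open>m + [m, m]\<close> is \<open>g\<close>, so \<open>k = [m, m]\<close>. A weight vector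
  \<open>Z\<^sub>1 + i Z\<^sub>2\<close> of \<open>k\<^sub>\<complex>\<close> for \<open>\<alpha>\<close> therefore pairs nontrivially with some \<open>[u, v]\<close>, and
  comparing the action of \<open>t\<close> on the eight pairings of \<open>Z\<^sub>1, Z\<^sub>2\<close> with \<open>[u, v], [u', v],
  [u, v'], [u', v']\<close> forces \<open>\<alpha> = \<plusminus>\<nu>\<^sub>u \<plusminus> \<nu>\<^sub>v\<close> on \<open>t\<close>.
\<close>

lemma trace_map_comp_commute:
  fixes f g :: "'a::euclidean_space \<Rightarrow> 'a"
  assumes "linear f" "linear g"
  shows "trace_map (\<lambda>z. f (g z)) = trace_map (\<lambda>z. g (f z))"
proof -
  have "trace_map (\<lambda>z. f (g z)) = (\<Sum>b\<in>Basis. \<Sum>c\<in>Basis. (g b \<bullet> c) * (f c \<bullet> b))"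
    unfolding trace_map_def
    by (intro sum.cong refl Linear_Algebra.linear_componentwise[OF assms(1)])
  also have "\<dots> = (\<Sum>c\<in>Basis. \<Sum>b\<in>Basis. (f c \<bullet> b) * (g b \<bullet> c))"
    by (subst sum.swap) (simp add: mult.commute)
  also have "\<dots> = trace_map (\<lambda>z. g (f z))"
    unfolding trace_map_def
    by (intro sum.cong refl Linear_Algebra.linear_componentwise[OF assms(2), symmetric])
  finally show ?thesis .
qed

lemma trace_map_diff: "trace_map (\<lambda>z. f z - g z) = trace_map f - trace_map g"
  unfolding trace_map_def by (simp add: inner_diff_left sum_subtractf)

lemma subspace_plus_eig: "linear f \<Longrightarrow> subspace (plus_eig f)"
  unfolding subspace_def plus_eig_def by (simp add: linear_0 linear_add linear_scale)

lemma subspace_minus_eig: "linear f \<Longrightarrow> subspace (minus_eig f)"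
  unfolding subspace_def minus_eig_def by (simp add: linear_0 linear_add linear_scale)

lemma plus_minus_eig_zero:
  assumes "x \<in> plus_eig f" "x \<in> minus_eig f"
  shows "x = 0"
proof -
  have "f x = x" "f x = - x" using assms unfolding plus_eig_def minus_eig_def by auto
  then have "x + x = 0" by (metis add.right_inverse)
  then have "2 *\<^sub>R x = 0" by (simp only: scaleR_2)
  then show ?thesis by simp
qed

lemma weight_space_swap:
  "(X1, X2) \<in> weight_space br t \<nu> V \<Longrightarrow> (X2, X1) \<in> weight_space br t (\<lambda>Y. - \<nu> Y) V"
  unfolding weight_space_def by auto

lemma weight_space_obtain_first_nonzero:
  assumes "bilinear br" "subspace V" "X \<in> weight_space br t \<nu> V" "X \<noteq> (0, 0)"
  obtains Z1 Z2 where "(Z1, Z2) \<in> weight_space br t \<nu> V" "Z1 \<noteq> 0"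
proof -
  obtain X1 X2 where X: "X = (X1, X2)" by fastforce
  show ?thesis
  proof (cases "X1 = 0")
    case True
    \<comment> \<open>multiplication by \<open>-i\<close> on the complexification\<close>
    have "(X2, - X1) \<in> weight_space br t \<nu> V"
      using assms(1-3) unfolding X weight_space_def by (auto simp: bilinear_rneg subspace_neg)
    then show ?thesis using True assms(4) X that by auto
  qed (use assms(3) X that in auto)
qed

lemma quadratic_nonneg_imp_linear_coeff_zero:
  fixes a b :: real
  assumes "\<And>s. 2 * s * b + s\<^sup>2 * a \<ge> 0"
  shows "b = 0"
proof (rule ccontr)
  assume "b \<noteq> 0"
  define s where "s = - b / (\<bar>a\<bar> + 1)"
  have "2 * s * b + s\<^sup>2 * a \<le> 2 * s * b + s\<^sup>2 * \<bar>a\<bar>" by (simp add: mult_left_mono)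
  also have "\<dots> = (b\<^sup>2 / (\<bar>a\<bar> + 1)\<^sup>2) * (\<bar>a\<bar> - 2 * (\<bar>a\<bar> + 1))"
    unfolding s_def power2_eq_square by (simp add: divide_simps) (simp add: algebra_simps)
  also have "\<dots> < 0"
    using \<open>b \<noteq> 0\<close> by (intro mult_pos_neg) auto
  finally show False using assms by (meson not_le)
qed

lemma rayleigh_quotient_max:
  fixes P :: "'a::euclidean_space \<Rightarrow> 'a \<Rightarrow> real"
  assumes P: "bilinear P" "\<And>x. x \<noteq> 0 \<Longrightarrow> P x x > 0"
    and W: "subspace W" "W \<noteq> {0}" and S: "linear S"
  obtains c x0 where "x0 \<in> W" "x0 \<noteq> 0" "P (S x0) x0 = c * P x0 x0"
    "\<And>y. y \<in> W \<Longrightarrow> P (S y) y \<le> c * P y y"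
proof -
  define K where "K = sphere 0 1 \<inter> W"
  define f where "f x = P (S x) x / P x x" for x
  have K0: "x \<noteq> 0" if "x \<in> K" for x using that unfolding K_def by auto
  have normalize_K: "(1 / norm y) *\<^sub>R y \<in> K" if "y \<in> W" "y \<noteq> 0" for y
    unfolding K_def using that W(1) by (auto simp: subspace_scale)
  have f_normalize: "f ((1 / norm y) *\<^sub>R y) = f y" for y
    unfolding f_def using S P(1)
    by (simp add: linear_0 linear_scale bilinear_lmul bilinear_rmul bilinear_rzero)
  have "compact K" unfolding K_def by (rule compact_Int_closed) (auto simp: closed_subspace W)
  moreover have "K \<noteq> {}" using W normalize_K subspace_0 by blast
  moreover have "continuous_on K f" unfolding f_def
  proof (rule continuous_on_divide)
    show "continuous_on K (\<lambda>x. P (S x) x)"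
      using S linear_continuous_on linear_conv_bounded_linear
      by (blast intro: bilinear_continuous_on_compose[OF _ continuous_on_id P(1)])
    show "continuous_on K (\<lambda>x. P x x)"
      by (rule bilinear_continuous_on_compose[OF continuous_on_id continuous_on_id P(1)])
  qed (use K0 P(2) in fastforce)
  ultimately obtain x0 where x0: "x0 \<in> K" "\<And>y. y \<in> K \<Longrightarrow> f y \<le> f x0"
    using continuous_attains_sup by metis
  show ?thesis
  proof (rule that)
    show "x0 \<in> W" "x0 \<noteq> 0" using x0(1) K0 unfolding K_def by auto
    then show "P (S x0) x0 = f x0 * P x0 x0" using P(2)[of x0] unfolding f_def by force
    show "P (S y) y \<le> f x0 * P y y" if "y \<in> W" for y
    proof (cases "y = 0")
      case True
      then show ?thesis using S P(1) by (simp add: linear_0 bilinear_rzero)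
    next
      case False
      then have "f y \<le> f x0" using x0(2)[OF normalize_K[OF that]] f_normalize by simp
      then show ?thesis using P(2)[OF False] unfolding f_def by (simp add: divide_le_eq)
    qed
  qed
qed

lemma symmetric_operator_has_eigenvector:
  fixes P :: "'a::euclidean_space \<Rightarrow> 'a \<Rightarrow> real"
  assumes P: "bilinear P" "\<And>x y. P x y = P y x" "\<And>x. x \<noteq> 0 \<Longrightarrow> P x x > 0"
    and W: "subspace W" "W \<noteq> {0}"
    and S: "linear S" "\<And>x. x \<in> W \<Longrightarrow> S x \<in> W"
    and S_sym: "\<And>x y. x \<in> W \<Longrightarrow> y \<in> W \<Longrightarrow> P (S x) y = P x (S y)"
  obtains x c where "x \<in> W" "x \<noteq> 0" "S x = c *\<^sub>R x"
proof -
  obtain c x0 where x0: "x0 \<in> W" "x0 \<noteq> 0" "P (S x0) x0 = c * P x0 x0"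
    and max: "\<And>y. y \<in> W \<Longrightarrow> P (S y) y \<le> c * P y y"
    using rayleigh_quotient_max[OF P(1,3) W S(1)] by metis
  define h where "h = c *\<^sub>R x0 - S x0"
  have hW: "h \<in> W" unfolding h_def using W x0 S by (simp add: subspace_diff subspace_scale)
  have hh: "P h h = c * P x0 h - P (S x0) h"
    unfolding h_def using P(1) by (simp add: bilinear_lsub bilinear_lmul)
  have Sh: "P (S h) x0 = P (S x0) h" using S_sym[OF hW x0(1)] P(2) by metis
  \<comment> \<open>first variation of the Rayleigh quotient at its maximum along \<open>h\<close>\<close>
  have "2 * s * P h h + s\<^sup>2 * (c * P h h - P (S h) h) \<ge> 0" for s
  proof -
    have "x0 + s *\<^sub>R h \<in> W" using x0 hW W by (simp add: subspace_add subspace_scale)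
    moreover have "c * P (x0 + s *\<^sub>R h) (x0 + s *\<^sub>R h) - P (S (x0 + s *\<^sub>R h)) (x0 + s *\<^sub>R h)
        = (c * P x0 x0 - P (S x0) x0) + 2 * s * (c * P x0 h - P (S x0) h)
          + s\<^sup>2 * (c * P h h - P (S h) h)"
      using S(1) P(1) Sh P(2)[of h x0]
      by (simp add: linear_add linear_scale bilinear_ladd bilinear_radd bilinear_lmul bilinear_rmul
          algebra_simps power2_eq_square)
    ultimately show ?thesis using max x0(3) unfolding hh[symmetric] by fastforce
  qed
  then have "P h h = 0" by (rule quadratic_nonneg_imp_linear_coeff_zero)
  then have "h = 0" using P(3)[of h] by fastforce
  then have "S x0 = c *\<^sub>R x0" unfolding h_def by simp
  then show ?thesis by (rule that[OF x0(1,2)])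
qed

lemma positive_form_projection:
  fixes P :: "'a::euclidean_space \<Rightarrow> 'a \<Rightarrow> real"
  assumes P: "bilinear P" "\<And>x. x \<noteq> 0 \<Longrightarrow> P x x > 0" and R: "subspace R"
  obtains r where "r \<in> R" "\<And>y. y \<in> R \<Longrightarrow> P (x - r) y = 0"
proof -
  obtain B where B: "B \<subseteq> R" "independent B" "R \<subseteq> span B" "card B = dim R"
    using basis_exists[of R] by blast
  have P_lin: "linear (P z)" for z using P(1) by (simp add: bilinear_def)
  define L where "L z = (\<Sum>b\<in>B. P z b *\<^sub>R b)" for z
  have L_lin: "linear L" unfolding L_def
    by (rule linearI) (simp_all add: bilinear_ladd[OF P(1)] bilinear_lmul[OF P(1)] scaleR_add_left
          sum.distrib scaleR_sum_right)
  have LR: "L z \<in> R" for z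
    unfolding L_def using B(1) R by (intro subspace_sum) (auto simp: subspace_scale)
  have kernel: "P z y = 0" if "L z = 0" "y \<in> R" for z y
  proof -
    have "(\<Sum>b\<in>B. (P z b)\<^sup>2) = P z (L z)" unfolding L_def
      by (simp add: linear_sum[OF P_lin] bilinear_rmul[OF P(1)] power2_eq_square)
    also have "\<dots> = 0" using that(1) P(1) by (simp add: bilinear_rzero)
    finally have "\<forall>b\<in>B. P z b = 0"
      using finiteI_independent[OF B(2)] by (simp add: sum_nonneg_eq_0_iff)
    then show ?thesis using linear_eq_0_on_span[OF P_lin] that(2) B(3) by blast
  qed
  have "inj_on L R"
  proof (rule inj_onI)
    fix a b assume "a \<in> R" "b \<in> R" "L a = L b"
    then have "P (a - b) (a - b) = 0" using kernel R L_lin by (simp add: linear_diff subspace_diff)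
    then show "a = b" using P(2)[of "a - b"] by fastforce
  qed
  moreover have "span R = R" using R by (rule span_eq_iff[THEN iffD2])
  ultimately have "dim (L ` R) = dim R" by (metis dim_image_eq[OF L_lin])
  then have "L ` R = R"
    using LR R L_lin by (intro subspace_dim_equal) (auto simp: linear_subspace_image)
  then obtain r where "r \<in> R" "L r = L x" using LR[of x] by (metis imageE)
  then show ?thesis using that kernel L_lin by (simp add: linear_diff)
qed

lemma rotation_relations_factor:
  fixes A L M a1 a2 a3 a4 b1 b2 b3 b4 e d :: real
  assumes "A * b1 = L * a2 + M * a3" "A * b2 = - L * a1 + M * a4"
    "A * b3 = L * a4 - M * a1" "A * b4 = - L * a3 - M * a2"
    "- A * a1 = L * b2 + M * b3" "- A * a2 = - L * b1 + M * b4"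
    "- A * a3 = L * b4 - M * b1" "- A * a4 = - L * b3 - M * b2"
    and "e = 1 \<or> e = -1" "d = 1 \<or> d = -1"
  shows "(A - e * L - d * M) * (a1 - e * b2 - d * b3 - e * d * a4) = 0"
  using assms(9,10) by (elim disjE) (use assms(1-8) in \<open>(simp add: algebra_simps; linarith)+\<close>)

lemma exists_sign_combination_nonzero:
  fixes p q r s :: real
  assumes "p \<noteq> 0"
  obtains e d where "e = 1 \<or> e = -1" "d = 1 \<or> d = -1" "p - e * q - d * r - e * d * s \<noteq> 0"
proof -
  have "(p - q - r - s) + (p - q + r + s) + (p + q - r + s) + (p + q + r - s) = 4 * p" by simp
  then show ?thesis
    using assms that[of 1 1] that[of 1 "-1"] that[of "-1" 1] that[of "-1" "-1"] by force
qed

locale cartan_lie_algebra =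
  fixes br :: "'a::euclidean_space \<Rightarrow> 'a \<Rightarrow> 'a" and \<theta> :: "'a \<Rightarrow> 'a"
  assumes lie: "lie_algebra br" and cartan: "cartan_involution br \<theta>"
begin

lemma bracket_bilinear: "bilinear br"
  using lie by (simp add: lie_algebra_def)

lemmas bracket_algebra =
  bilinear_ladd[OF bracket_bilinear] bilinear_radd[OF bracket_bilinear]
  bilinear_lsub[OF bracket_bilinear] bilinear_rsub[OF bracket_bilinear]
  bilinear_lneg[OF bracket_bilinear] bilinear_rneg[OF bracket_bilinear]
  bilinear_lmul[OF bracket_bilinear] bilinear_rmul[OF bracket_bilinear]
  bilinear_lzero[OF bracket_bilinear] bilinear_rzero[OF bracket_bilinear]

lemma bracket_linear: "linear (br x)"
  using bracket_bilinear by (simp add: bilinear_def)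

lemma bracket_linear_left: "linear (\<lambda>x. br x y)"
  using bracket_bilinear by (simp add: bilinear_def)

lemma bracket_antisym: "br x y = - br y x"
proof -
  have "br (x + y) (x + y) = 0" and "br x x = 0" and "br y y = 0"
    using lie by (simp_all add: lie_algebra_def)
  then have "br y x + br x y = 0" by (simp add: bracket_algebra)
  then show ?thesis by (metis add.commute eq_neg_iff_add_eq_0)
qed

lemma bracket_derivation: "br z (br x y) = br (br z x) y + br x (br z y)"
proof -
  have "br z (br x y) + br x (br y z) + br y (br z x) = 0"
    using lie by (simp add: lie_algebra_def)
  then show ?thesis
    using bracket_antisym[of y z] bracket_antisym[of y "br z x"]
    by (simp add: bracket_algebra algebra_simps)
qed

lemma theta_linear: "linear \<theta>"
  and theta_bracket: "\<theta> (br x y) = br (\<theta> x) (\<theta> y)"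
  and theta_theta: "\<theta> (\<theta> x) = x"
  and killing_theta_neg: "x \<noteq> 0 \<Longrightarrow> - killing br x (\<theta> x) > 0"
  using cartan by (simp_all add: cartan_involution_def lie_involution_def lie_aut_def)

lemma killing_bilinear: "bilinear (killing br)"
  unfolding bilinear_def killing_def trace_map_def
  by (auto intro!: linearI simp: bracket_algebra inner_add_left sum.distrib sum_distrib_left)

lemma killing_sym: "killing br x y = killing br y x"
  unfolding killing_def by (rule trace_map_comp_commute[OF bracket_linear bracket_linear])

lemma killing_invariant: "killing br (br x y) z = killing br x (br y z)"
proof -
  have comm: "br (br a b) w = br a (br b w) - br b (br a w)" for a b w
    using bracket_derivation[of a b w] by simp
  have "linear (\<lambda>w. br x (br z w))"
    using linear_compose[OF bracket_linear bracket_linear] by (simp add: o_def)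
  then have "trace_map (\<lambda>w. br y (br x (br z w))) = trace_map (\<lambda>w. br x (br z (br y w)))"
    using trace_map_comp_commute[OF bracket_linear[of y]] by simp
  moreover have "killing br (br x y) z
      = trace_map (\<lambda>w. br x (br y (br z w))) - trace_map (\<lambda>w. br y (br x (br z w)))"
    unfolding killing_def comm by (rule trace_map_diff)
  moreover have "killing br x (br y z)
      = trace_map (\<lambda>w. br x (br y (br z w))) - trace_map (\<lambda>w. br x (br z (br y w)))"
    unfolding killing_def comm by (simp add: bracket_algebra trace_map_diff)
  ultimately show ?thesis by simp
qed

lemma killing_theta: "killing br (\<theta> x) (\<theta> y) = killing br x y"
proof -
  have "linear (\<lambda>w. br x (br y (\<theta> w)))"
    using linear_compose[OF theta_linear linear_compose[OF bracket_linear bracket_linear]]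
    by (simp add: o_def)
  then have "trace_map (\<lambda>w. \<theta> (br x (br y (\<theta> w)))) = trace_map (\<lambda>w. br x (br y (\<theta> (\<theta> w))))"
    by (rule trace_map_comp_commute[OF theta_linear])
  then show ?thesis unfolding killing_def by (simp add: theta_bracket theta_theta)
qed

definition inner_theta :: "'a \<Rightarrow> 'a \<Rightarrow> real" where
  "inner_theta x y = - killing br x (\<theta> y)"

lemma inner_theta_bilinear: "bilinear inner_theta"
  using killing_bilinear linear_compose[OF theta_linear]
  unfolding bilinear_def inner_theta_def by (auto simp: o_def intro: module_hom_neg)

lemmas inner_theta_algebra =
  bilinear_ladd[OF inner_theta_bilinear] bilinear_radd[OF inner_theta_bilinear]
  bilinear_lsub[OF inner_theta_bilinear] bilinear_rsub[OF inner_theta_bilinear]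
  bilinear_lneg[OF inner_theta_bilinear] bilinear_rneg[OF inner_theta_bilinear]
  bilinear_lmul[OF inner_theta_bilinear] bilinear_rmul[OF inner_theta_bilinear]
  bilinear_lzero[OF inner_theta_bilinear] bilinear_rzero[OF inner_theta_bilinear]

lemma inner_theta_sym: "inner_theta x y = inner_theta y x"
  unfolding inner_theta_def by (metis killing_sym killing_theta theta_theta)

lemma inner_theta_pos: "x \<noteq> 0 \<Longrightarrow> inner_theta x x > 0"
  unfolding inner_theta_def by (rule killing_theta_neg)

lemma inner_theta_bracket_skew:
  assumes "Y \<in> plus_eig \<theta>"
  shows "inner_theta (br Y x) y = - inner_theta x (br Y y)"
proof -
  have "inner_theta (br Y x) y = killing br (br x Y) (\<theta> y)"
    unfolding inner_theta_def using killing_bilinear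
    by (simp add: bracket_antisym[of Y x] bilinear_lneg)
  also have "\<dots> = killing br x (br Y (\<theta> y))" by (rule killing_invariant)
  also have "\<dots> = - inner_theta x (br Y y)"
    using assms unfolding inner_theta_def plus_eig_def by (simp add: theta_bracket)
  finally show ?thesis .
qed

lemma bracket_plus_minus: "Y \<in> plus_eig \<theta> \<Longrightarrow> x \<in> minus_eig \<theta> \<Longrightarrow> br Y x \<in> minus_eig \<theta>"
  and bracket_minus_plus: "x \<in> minus_eig \<theta> \<Longrightarrow> Y \<in> plus_eig \<theta> \<Longrightarrow> br x Y \<in> minus_eig \<theta>"
  and bracket_minus_minus: "x \<in> minus_eig \<theta> \<Longrightarrow> y \<in> minus_eig \<theta> \<Longrightarrow> br x y \<in> plus_eig \<theta>"
  unfolding plus_eig_def minus_eig_def by (simp_all add: theta_bracket bracket_algebra)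

lemma plus_minus_decomposition:
  obtains z\<^sub>k z\<^sub>m where "z = z\<^sub>k + z\<^sub>m" "z\<^sub>k \<in> plus_eig \<theta>" "z\<^sub>m \<in> minus_eig \<theta>"
proof
  show "z = (1/2) *\<^sub>R (z + \<theta> z) + (1/2) *\<^sub>R (z - \<theta> z)"
    by (simp add: algebra_simps flip: scaleR_2)
  show "(1/2) *\<^sub>R (z + \<theta> z) \<in> plus_eig \<theta>" "(1/2) *\<^sub>R (z - \<theta> z) \<in> minus_eig \<theta>"
    unfolding plus_eig_def minus_eig_def using theta_linear
    by (simp_all add: linear_scale linear_add linear_diff theta_theta)
qed

lemma bracket_in_derived:
  assumes "x \<in> span A" "y \<in> span A"
  shows "br x y \<in> derived br A"
proof -
  have "subspace (derived br A)" unfolding derived_def by simp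
  have left: "br x' b \<in> derived br A" if "x' \<in> span A" "b \<in> A" for x' b
    using that(1)
  proof (rule span_induct)
    show "subspace {x. br x b \<in> derived br A}"
      by (rule linear_subspace_linear_preimage[OF bracket_linear_left \<open>subspace (derived br A)\<close>])
  qed (use that(2) in \<open>auto simp: derived_def intro: span_base\<close>)
  show ?thesis
    using assms(2)
  proof (rule span_induct)
    show "subspace {y. br x y \<in> derived br A}"
      by (rule linear_subspace_linear_preimage[OF bracket_linear \<open>subspace (derived br A)\<close>])
  qed (use left assms(1) in auto)
qed

lemma derived_subset_derived:
  assumes "A \<subseteq> span B"
  shows "derived br A \<subseteq> derived br B"
  unfolding derived_def[of br A]
proof (rule span_minimal)
  show "{br x y |x y. x \<in> A \<and> y \<in> A} \<subseteq> derived br B"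
    using assms by (auto intro: bracket_in_derived)
qed (simp add: derived_def)

lemma derived_minus_eig_subset_plus_eig: "derived br (minus_eig \<theta>) \<subseteq> plus_eig \<theta>"
  unfolding derived_def
  by (rule span_minimal) (auto intro: bracket_minus_minus subspace_plus_eig theta_linear)

lemma bracket_plus_eig_derived:
  assumes z: "z \<in> plus_eig \<theta>" and s: "s \<in> derived br (minus_eig \<theta>)"
  shows "br z s \<in> derived br (minus_eig \<theta>)"
proof -
  have "s \<in> span {br a b |a b. a \<in> minus_eig \<theta> \<and> b \<in> minus_eig \<theta>}"
    using s unfolding derived_def .
  then show ?thesis
  proof (rule span_induct)
    show "subspace {s. br z s \<in> derived br (minus_eig \<theta>)}"
      by (rule linear_subspace_linear_preimage[OF bracket_linear]) (simp add: derived_def)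
    fix s assume "s \<in> {br a b |a b. a \<in> minus_eig \<theta> \<and> b \<in> minus_eig \<theta>}"
    then obtain a b where s: "s = br a b" "a \<in> minus_eig \<theta>" "b \<in> minus_eig \<theta>" by blast
    then have "br (br z a) b \<in> derived br (minus_eig \<theta>)" "br a (br z b) \<in> derived br (minus_eig \<theta>)"
      using bracket_plus_minus[OF z] by (auto simp: derived_def intro!: span_base)
    then show "br z s \<in> derived br (minus_eig \<theta>)"
      using s(1) bracket_derivation[of z a b] by (simp add: derived_def span_add)
  qed
qed

lemma lie_ideal_minus_eig_plus_derived:
  "lie_ideal br {a + s | a s. a \<in> minus_eig \<theta> \<and> s \<in> derived br (minus_eig \<theta>)}"
  unfolding lie_ideal_def
proof (intro conjI allI impI)
  show "subspace {a + s | a s. a \<in> minus_eig \<theta> \<and> s \<in> derived br (minus_eig \<theta>)}"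
    by (intro subspace_sums subspace_minus_eig theta_linear) (simp add: derived_def)
  fix z y assume "y \<in> {a + s | a s. a \<in> minus_eig \<theta> \<and> s \<in> derived br (minus_eig \<theta>)}"
  then obtain a s where y: "y = a + s" "a \<in> minus_eig \<theta>" "s \<in> derived br (minus_eig \<theta>)"
    by blast
  obtain z\<^sub>k z\<^sub>m where z: "z = z\<^sub>k + z\<^sub>m" "z\<^sub>k \<in> plus_eig \<theta>" "z\<^sub>m \<in> minus_eig \<theta>"
    by (rule plus_minus_decomposition)
  have s_plus: "s \<in> plus_eig \<theta>" using y(3) derived_minus_eig_subset_plus_eig by blast
  have "br z y = (br z\<^sub>k a + br z\<^sub>m s) + (br z\<^sub>m a + br z\<^sub>k s)"
    unfolding z(1) y(1) by (simp add: bracket_algebra algebra_simps)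
  moreover have "br z\<^sub>k a + br z\<^sub>m s \<in> minus_eig \<theta>"
    using bracket_plus_minus[OF z(2) y(2)] bracket_minus_plus[OF z(3) s_plus]
    by (simp add: subspace_add subspace_minus_eig theta_linear)
  moreover have "br z\<^sub>m a \<in> derived br (minus_eig \<theta>)"
    using z(3) y(2) by (auto simp: derived_def intro: span_base)
  then have "br z\<^sub>m a + br z\<^sub>k s \<in> derived br (minus_eig \<theta>)"
    using bracket_plus_eig_derived[OF z(2) y(3)] by (simp add: derived_def span_add)
  ultimately show "br z y \<in> {a + s | a s. a \<in> minus_eig \<theta> \<and> s \<in> derived br (minus_eig \<theta>)}"
    by blast
qed

lemma commuting_aut_minus_eig:
  assumes "lie_aut br \<sigma>" "\<forall>x. \<sigma> (\<theta> x) = \<theta> (\<sigma> x)" "a \<in> minus_eig \<theta>"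
  shows "\<sigma> a \<in> minus_eig \<theta>"
proof -
  have a: "\<theta> a = - a" using assms(3) unfolding minus_eig_def by blast
  have "\<theta> (\<sigma> a) = \<sigma> (\<theta> a)" by (simp add: assms(2))
  also have "\<dots> = \<sigma> (- a)" by (simp only: a)
  also have "\<dots> = - \<sigma> a" using assms(1) by (simp add: lie_aut_def linear_neg)
  finally show ?thesis by (simp add: minus_eig_def)
qed

lemma commuting_aut_derived_minus_eig:
  assumes \<sigma>: "lie_aut br \<sigma>" "\<forall>x. \<sigma> (\<theta> x) = \<theta> (\<sigma> x)" and s: "s \<in> derived br (minus_eig \<theta>)"
  shows "\<sigma> s \<in> derived br (minus_eig \<theta>)"
proof -
  have "s \<in> span {br a b |a b. a \<in> minus_eig \<theta> \<and> b \<in> minus_eig \<theta>}"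
    using s unfolding derived_def .
  then show ?thesis
  proof (rule span_induct)
    show "subspace {s. \<sigma> s \<in> derived br (minus_eig \<theta>)}"
      using \<sigma>(1) unfolding lie_aut_def
      by (intro linear_subspace_linear_preimage) (simp_all add: derived_def)
    show "\<sigma> s \<in> derived br (minus_eig \<theta>)"
      if gen: "s \<in> {br a b |a b. a \<in> minus_eig \<theta> \<and> b \<in> minus_eig \<theta>}" for s
    proof -
      obtain a b where ab: "s = br a b" "a \<in> minus_eig \<theta>" "b \<in> minus_eig \<theta>"
        using gen by blast
      then have "\<sigma> s = br (\<sigma> a) (\<sigma> b)" using \<sigma>(1) unfolding lie_aut_def by blast
      then show ?thesis
        using commuting_aut_minus_eig[OF \<sigma>] ab(2,3) unfolding derived_def
        by (blast intro: span_base)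
    qed
  qed
qed

lemma minus_eig_nonzero:
  assumes "\<not> compact_lie br"
  shows "minus_eig \<theta> \<noteq> {0}"
proof
  assume "minus_eig \<theta> = {0}"
  then have theta_id: "\<theta> x = x" for x
    using plus_minus_decomposition[of x] unfolding plus_eig_def by auto
  have "killing br x x < 0" if "x \<noteq> 0" for x
    using killing_theta_neg[OF that] theta_id[of x] by simp
  then show False using assms unfolding compact_lie_def by blast
qed

text \<open>The \<open>\<sigma>\<close>-stable ideal \<open>m + [m, m]\<close> must be all of \<open>g\<close>, while \<open>[m, m] \<subseteq> k\<close>.\<close>

lemma plus_eig_subset_derived_minus_eig:
  assumes \<sigma>: "lie_involution br \<sigma>" "\<forall>x. \<sigma> (\<theta> x) = \<theta> (\<sigma> x)"
    and noncompact: "\<not> compact_lie br"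
    and simple: "\<forall>I. lie_ideal br I \<and> \<sigma> ` I \<subseteq> I \<longrightarrow> I = {0} \<or> I = UNIV"
  shows "plus_eig \<theta> \<subseteq> derived br (minus_eig \<theta>)"
proof
  fix x assume x: "x \<in> plus_eig \<theta>"
  define I where "I = {a + s | a s. a \<in> minus_eig \<theta> \<and> s \<in> derived br (minus_eig \<theta>)}"
  have aut: "lie_aut br \<sigma>" using \<sigma>(1) by (simp add: lie_involution_def)
  have "\<sigma> y \<in> I" if "y \<in> I" for y
  proof -
    obtain a s where "y = a + s" "a \<in> minus_eig \<theta>" "s \<in> derived br (minus_eig \<theta>)"
      using \<open>y \<in> I\<close> unfolding I_def by blast
    moreover have "\<sigma> (a + s) = \<sigma> a + \<sigma> s" using aut by (simp add: lie_aut_def linear_add)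
    ultimately show ?thesis
      unfolding I_def using commuting_aut_minus_eig[OF aut \<sigma>(2)]
        commuting_aut_derived_minus_eig[OF aut \<sigma>(2)] by blast
  qed
  then have "\<sigma> ` I \<subseteq> I" by blast
  moreover have "lie_ideal br I" unfolding I_def by (rule lie_ideal_minus_eig_plus_derived)
  moreover have "I \<noteq> {0}"
  proof -
    have "0 \<in> derived br (minus_eig \<theta>)" by (simp add: derived_def span_zero)
    then have "minus_eig \<theta> \<subseteq> I" unfolding I_def by force
    then show ?thesis
      using minus_eig_nonzero[OF noncompact] subspace_0[OF subspace_minus_eig[OF theta_linear]]
      by blast
  qed
  ultimately have "I = UNIV" using simple by blast
  then obtain a s where as: "x = a + s" "a \<in> minus_eig \<theta>" "s \<in> derived br (minus_eig \<theta>)"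
    unfolding I_def by blast
  have "a = x - s" using as(1) by simp
  then have "a \<in> plus_eig \<theta>"
    using x as(3) derived_minus_eig_subset_plus_eig
    by (auto intro: subspace_diff subspace_plus_eig theta_linear)
  then have "a = 0" using as(2) by (rule plus_minus_eig_zero)
  then show "x \<in> derived br (minus_eig \<theta>)" using as by simp
qed

end

locale cartan_torus = cartan_lie_algebra +
  fixes t :: "'a set"
  assumes t_plus_eig: "t \<subseteq> plus_eig \<theta>"
    and t_abelian: "\<And>Y Z. Y \<in> t \<Longrightarrow> Z \<in> t \<Longrightarrow> br Y Z = 0"
begin

lemma t_commute: "Y \<in> t \<Longrightarrow> Z \<in> t \<Longrightarrow> br Y (br Z x) = br Z (br Y x)"
  using bracket_derivation[of Y Z x] t_abelian[of Y Z] by (simp add: bracket_algebra)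

lemma inner_theta_t_skew: "Y \<in> t \<Longrightarrow> inner_theta (br Y x) y = - inner_theta x (br Y y)"
  using inner_theta_bracket_skew t_plus_eig by blast

definition t_invariant :: "'a set \<Rightarrow> bool" where
  "t_invariant W \<longleftrightarrow> subspace W \<and> (\<forall>Y\<in>t. \<forall>x\<in>W. br Y x \<in> W)"

definition minimal_t_invariant :: "'a set \<Rightarrow> bool" where
  "minimal_t_invariant W \<longleftrightarrow> t_invariant W \<and> W \<noteq> {0} \<and>
     (\<forall>W'. t_invariant W' \<and> W' \<subseteq> W \<and> W' \<noteq> {0} \<longrightarrow> W' = W)"

lemma exists_minimal_t_invariant:
  assumes "t_invariant U" "U \<noteq> {0}"
  obtains W where "minimal_t_invariant W" "W \<subseteq> U"
proof -
  let ?Q = "\<lambda>n. \<exists>W::'a set. t_invariant W \<and> W \<subseteq> U \<and> W \<noteq> {0} \<and> dim W = n"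
  have "?Q (dim U)" using assms by blast
  then have "?Q (LEAST n. ?Q n)" by (rule LeastI)
  then obtain W where W: "t_invariant W" "W \<subseteq> U" "W \<noteq> {0}" "dim W = (LEAST n. ?Q n)"
    by blast
  have "W' = W" if W': "t_invariant W'" "W' \<subseteq> W" "W' \<noteq> {0}" for W'
  proof (rule subspace_dim_equal)
    show "subspace W'" "subspace W" using W'(1) W(1) unfolding t_invariant_def by blast+
    have "?Q (dim W')" using W' W(2) by blast
    then show "dim W \<le> dim W'" unfolding W(4) by (rule Least_le)
  qed (use W' in blast)
  then have "minimal_t_invariant W" using W(1,3) unfolding minimal_t_invariant_def by blast
  then show ?thesis using that W(2) by blast
qed

lemma minimal_t_invariant_nonzero:
  assumes "minimal_t_invariant W"
  obtains w where "w \<in> W" "w \<noteq> 0"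
proof -
  have "0 \<in> W" "W \<noteq> {0}"
    using assms subspace_0 unfolding minimal_t_invariant_def t_invariant_def by auto
  then show ?thesis using that by blast
qed

text \<open>Schur's lemma: \<open>ad Y ad Z\<close> is \<open>B\<^sub>\<theta>\<close>-symmetric and commutes with \<open>ad t\<close>, so one of its
  eigenspaces is a nonzero invariant subspace of \<open>W\<close>.\<close>

lemma minimal_t_invariant_scalar:
  assumes W: "minimal_t_invariant W" and Y: "Y \<in> t" and Z: "Z \<in> t"
  obtains c where "\<And>x. x \<in> W \<Longrightarrow> br Y (br Z x) = c *\<^sub>R x"
proof -
  define S where "S x = br Y (br Z x)" for x
  have W_sub: "subspace W" and W_inv: "\<And>Y x. Y \<in> t \<Longrightarrow> x \<in> W \<Longrightarrow> br Y x \<in> W"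
    and W_nz: "W \<noteq> {0}"
    using W unfolding minimal_t_invariant_def t_invariant_def by blast+
  have S_lin: "linear S"
    unfolding S_def using linear_compose[OF bracket_linear bracket_linear] by (simp add: o_def)
  have S_W: "S x \<in> W" if "x \<in> W" for x
    unfolding S_def using W_inv Y Z that by blast
  have S_sym: "inner_theta (S x) y = inner_theta x (S y)" if "x \<in> W" "y \<in> W" for x y
    unfolding S_def using inner_theta_t_skew[OF Y] inner_theta_t_skew[OF Z] t_commute[OF Y Z]
    by simp
  obtain x1 c where "x1 \<in> W" "x1 \<noteq> 0" "S x1 = c *\<^sub>R x1"
    by (rule symmetric_operator_has_eigenvector[where P = inner_theta and S = S,
          OF inner_theta_bilinear inner_theta_sym inner_theta_pos W_sub W_nz S_lin S_W S_sym])
  moreover define E where "E = {x \<in> W. S x = c *\<^sub>R x}"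
  ultimately have "E \<noteq> {0}" by blast
  moreover have "t_invariant E"
    unfolding t_invariant_def
  proof
    show "subspace E"
      unfolding E_def subspace_def using W_sub S_lin
      by (auto simp: subspace_0 subspace_add subspace_scale linear_0 linear_add linear_scale
          algebra_simps)
    show "\<forall>Z'\<in>t. \<forall>x\<in>E. br Z' x \<in> E"
    proof (intro ballI)
      fix Z' x assume "Z' \<in> t" "x \<in> E"
      have "S (br Z' x) = br Z' (S x)"
        unfolding S_def using t_commute[OF Z \<open>Z' \<in> t\<close>] t_commute[OF Y \<open>Z' \<in> t\<close>] by simp
      then have "S (br Z' x) = c *\<^sub>R br Z' x"
        using \<open>x \<in> E\<close> unfolding E_def by (simp add: bracket_algebra)
      then show "br Z' x \<in> E" using \<open>Z' \<in> t\<close> \<open>x \<in> E\<close> W_inv unfolding E_def by blast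
    qed
  qed
  ultimately have "E = W" using W unfolding minimal_t_invariant_def E_def by blast
  then show ?thesis using that unfolding E_def S_def by blast
qed

text \<open>\<open>u\<close> is the imaginary part of a \<open>t\<close>-weight vector \<open>u' + i u\<close> of \<open>m\<^sub>\<complex>\<close>.\<close>

definition m_weight_vector :: "'a \<Rightarrow> bool" where
  "m_weight_vector u \<longleftrightarrow> (\<exists>\<nu> u'. linear \<nu> \<and> (u', u) \<in> weight_space br t \<nu> (minus_eig \<theta>))"

lemma minimal_t_invariant_partner:
  assumes W: "minimal_t_invariant W" and w: "w \<in> W" and Y0: "Y0 \<in> t" "br Y0 w \<noteq> 0"
  obtains u' where "u' \<in> W" "u' \<noteq> 0"
    "\<And>Z. Z \<in> t \<Longrightarrow> \<exists>\<mu>. br Z w = \<mu> *\<^sub>R u' \<and> br Z u' = - (\<mu> *\<^sub>R w)"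
proof -
  have W_inv: "\<And>Y x. Y \<in> t \<Longrightarrow> x \<in> W \<Longrightarrow> br Y x \<in> W" and W_sub: "subspace W"
    using W unfolding minimal_t_invariant_def t_invariant_def by blast+
  obtain c0 where c0: "\<And>x. x \<in> W \<Longrightarrow> br Y0 (br Y0 x) = c0 *\<^sub>R x"
    using minimal_t_invariant_scalar[OF W Y0(1) Y0(1)] by blast
  have "w \<noteq> 0" using Y0(2) by (auto simp: bracket_algebra)
  have "0 < inner_theta (br Y0 w) (br Y0 w)" using inner_theta_pos[OF Y0(2)] .
  also have "\<dots> = - c0 * inner_theta w w"
    using inner_theta_t_skew[OF Y0(1)] c0[OF w] by (simp add: inner_theta_algebra)
  finally have "c0 < 0" using inner_theta_pos[OF \<open>w \<noteq> 0\<close>] by (simp add: mult_less_0_iff)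
  define l where "l = sqrt (- c0)"
  have l: "l > 0" "c0 = - (l * l)" unfolding l_def using \<open>c0 < 0\<close> by simp_all
  define u' where "u' = (1 / l) *\<^sub>R br Y0 w"
  have "u' \<in> W" unfolding u'_def using W_sub W_inv[OF Y0(1) w] by (simp add: subspace_scale)
  moreover have "u' \<noteq> 0" unfolding u'_def using l Y0(2) by simp
  moreover have "\<exists>\<mu>. br Z w = \<mu> *\<^sub>R u' \<and> br Z u' = - (\<mu> *\<^sub>R w)" if Z: "Z \<in> t" for Z
  proof -
    obtain k where k: "\<And>x. x \<in> W \<Longrightarrow> br Y0 (br Z x) = k *\<^sub>R x"
      using minimal_t_invariant_scalar[OF W Y0(1) Z] by blast
    have "c0 *\<^sub>R br Z w = br Y0 (br Y0 (br Z w))" using c0[OF W_inv[OF Z w]] by simp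
    also have "\<dots> = k *\<^sub>R br Y0 w" using k[OF w] by (simp add: bracket_algebra)
    also have "\<dots> = (k * l) *\<^sub>R u'" unfolding u'_def using l by simp
    finally have eq: "c0 *\<^sub>R br Z w = (k * l) *\<^sub>R u'" .
    have "br Z w = (1 / c0) *\<^sub>R (c0 *\<^sub>R br Z w)" using l by simp
    also have "\<dots> = (- k / l) *\<^sub>R u'" unfolding eq using l by (simp add: field_simps)
    finally have "br Z w = (- k / l) *\<^sub>R u'" .
    moreover have "br Z u' = (k / l) *\<^sub>R w"
      unfolding u'_def using t_commute[OF Z Y0(1)] k[OF w] by (simp add: bracket_algebra)
    ultimately show ?thesis by (intro exI[of _ "- k / l"]) simp
  qed
  ultimately show ?thesis using that by blast
qed

lemma minimal_t_invariant_m_weight_vector: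
  assumes W: "minimal_t_invariant W" "W \<subseteq> minus_eig \<theta>" and w: "w \<in> W"
  shows "m_weight_vector w"
proof (cases "\<forall>Y\<in>t. br Y w = 0")
  case True
  have "(0, w) \<in> weight_space br t (\<lambda>_. 0) (minus_eig \<theta>)"
    using True w W(2) subspace_0[OF subspace_minus_eig[OF theta_linear]]
    unfolding weight_space_def by (auto simp: bracket_algebra)
  then show ?thesis unfolding m_weight_vector_def by (blast intro: linear_zero)
next
  case False
  then obtain Y0 where "Y0 \<in> t" "br Y0 w \<noteq> 0" by blast
  then obtain u' where u': "u' \<in> W" "u' \<noteq> 0"
    and rotation: "\<And>Z. Z \<in> t \<Longrightarrow> \<exists>\<mu>. br Z w = \<mu> *\<^sub>R u' \<and> br Z u' = - (\<mu> *\<^sub>R w)"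
    using minimal_t_invariant_partner[OF W(1) w] by metis
  define \<nu> where "\<nu> Z = inner_theta (br Z w) u' / inner_theta u' u'" for Z
  have "linear \<nu>" unfolding \<nu>_def
    by (rule linearI) (simp_all add: bracket_algebra inner_theta_algebra add_divide_distrib)
  moreover have "(u', w) \<in> weight_space br t \<nu> (minus_eig \<theta>)"
    unfolding weight_space_def
  proof (intro CollectI case_prodI conjI ballI)
    show "u' \<in> minus_eig \<theta>" "w \<in> minus_eig \<theta>" using u'(1) w W(2) by blast+
    fix Z assume "Z \<in> t"
    then obtain \<mu> where \<mu>: "br Z w = \<mu> *\<^sub>R u'" "br Z u' = - (\<mu> *\<^sub>R w)" using rotation by blast
    then have "\<nu> Z = \<mu>"
      unfolding \<nu>_def \<mu>(1) using inner_theta_pos[OF u'(2)] by (simp add: inner_theta_algebra)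
    then show "br Z u' = - (\<nu> Z *\<^sub>R w)" "br Z w = \<nu> Z *\<^sub>R u'" using \<mu> by simp_all
  qed
  ultimately show ?thesis unfolding m_weight_vector_def by blast
qed

lemma exists_m_weight_vector:
  assumes "t_invariant U" "U \<subseteq> minus_eig \<theta>" "U \<noteq> {0}"
  obtains u where "u \<in> U" "u \<noteq> 0" "m_weight_vector u"
proof -
  obtain W where W: "minimal_t_invariant W" "W \<subseteq> U"
    using exists_minimal_t_invariant[OF assms(1,3)] .
  obtain w where "w \<in> W" "w \<noteq> 0" by (rule minimal_t_invariant_nonzero[OF W(1)])
  then show ?thesis
    using that W minimal_t_invariant_m_weight_vector[OF W(1)] assms(2) by blast
qed

lemma m_weight_vector_minus_eig: "m_weight_vector u \<Longrightarrow> u \<in> minus_eig \<theta>"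
  unfolding m_weight_vector_def weight_space_def by blast

lemma bracket_m_weight_vector:
  assumes "m_weight_vector u" "Y \<in> t"
  shows "br Y u \<in> span {u. m_weight_vector u}"
proof -
  obtain \<nu> u' where \<nu>: "linear \<nu>" "(u', u) \<in> weight_space br t \<nu> (minus_eig \<theta>)"
    using assms(1) unfolding m_weight_vector_def by blast
  have "m_weight_vector u'"
    using weight_space_swap[OF \<nu>(2)] module_hom_neg[OF \<nu>(1)] unfolding m_weight_vector_def by blast
  then have "u' \<in> span {u. m_weight_vector u}" by (simp add: span_base)
  then show ?thesis using \<nu>(2) assms(2) unfolding weight_space_def by (simp add: span_scale)
qed

text \<open>The \<open>B\<^sub>\<theta>\<close>-orthogonal complement in \<open>m\<close> of the span of the weight vectors is
  \<open>t\<close>-invariant, so it would contain a weight vector if it were nonzero.\<close>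

lemma minus_eig_subset_span_m_weight_vectors: "minus_eig \<theta> \<subseteq> span {u. m_weight_vector u}"
proof
  fix x assume x: "x \<in> minus_eig \<theta>"
  define R where "R = span {u. m_weight_vector u}"
  have m_sub: "subspace (minus_eig \<theta>)" by (rule subspace_minus_eig[OF theta_linear])
  have R_sub: "subspace R" unfolding R_def by simp
  have R_m: "R \<subseteq> minus_eig \<theta>"
    unfolding R_def using m_weight_vector_minus_eig by (intro span_minimal m_sub) blast
  have R_inv: "br Y r \<in> R" if "Y \<in> t" "r \<in> R" for Y r
    using \<open>r \<in> R\<close> unfolding R_def
  proof (rule span_induct)
    show "subspace {r. br Y r \<in> span {u. m_weight_vector u}}"
      by (rule linear_subspace_linear_preimage[OF bracket_linear subspace_span])
  qed (use bracket_m_weight_vector \<open>Y \<in> t\<close> in blast)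
  define U where "U = {z \<in> minus_eig \<theta>. \<forall>r\<in>R. inner_theta z r = 0}"
  have "t_invariant U"
    unfolding t_invariant_def
  proof (intro conjI ballI)
    show "subspace U" unfolding U_def subspace_def using m_sub
      by (auto simp: subspace_0 subspace_add subspace_scale inner_theta_algebra)
    fix Y z assume Y: "Y \<in> t" and z: "z \<in> U"
    have "br Y z \<in> minus_eig \<theta>"
      using bracket_plus_minus t_plus_eig Y z unfolding U_def by blast
    moreover have "inner_theta (br Y z) r = 0" if "r \<in> R" for r
      using inner_theta_t_skew[OF Y, of z r] R_inv[OF Y that] z unfolding U_def by simp
    ultimately show "br Y z \<in> U" unfolding U_def by blast
  qed
  have U0: "U = {0}"
  proof (rule ccontr)
    assume "U \<noteq> {0}"
    moreover have "U \<subseteq> minus_eig \<theta>" unfolding U_def by blast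
    ultimately obtain u where u: "u \<in> U" "u \<noteq> 0" "m_weight_vector u"
      using exists_m_weight_vector \<open>t_invariant U\<close> by blast
    then have "u \<in> R" unfolding R_def by (simp add: span_base)
    then have "inner_theta u u = 0" using u(1) unfolding U_def by blast
    then show False using inner_theta_pos[OF u(2)] by simp
  qed
  obtain r where r: "r \<in> R" "\<And>y. y \<in> R \<Longrightarrow> inner_theta (x - r) y = 0"
    using positive_form_projection[OF inner_theta_bilinear inner_theta_pos R_sub] by blast
  have "x - r \<in> U"
    unfolding U_def using x r R_m m_sub by (auto intro: subspace_diff)
  then have "x = r" using U0 by simp
  then show "x \<in> span {u. m_weight_vector u}" using r(1) unfolding R_def by simp
qed

lemma m_weight_vector_root:
  assumes u: "(u', u) \<in> weight_space br t \<nu> (minus_eig \<theta>)" "u \<noteq> 0" and e: "e = 1 \<or> e = -1"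
  shows "is_root br t (\<lambda>Y. e * \<nu> Y) (minus_eig \<theta>) \<or> (\<forall>Y\<in>t. e * \<nu> Y = 0)"
proof -
  have "\<exists>X\<in>weight_space br t (\<lambda>Y. e * \<nu> Y) (minus_eig \<theta>). X \<noteq> (0, 0)"
    using e
  proof
    assume "e = 1"
    then show ?thesis using u by (intro bexI[of _ "(u', u)"]) simp_all
  next
    assume "e = -1"
    then show ?thesis using weight_space_swap[OF u(1)] u(2) by (intro bexI[of _ "(u, u')"]) simp_all
  qed
  then show ?thesis unfolding is_root_def by blast
qed

text \<open>Up to the sign \<open>-e d\<close>, the second factor is the real part of the hermitian pairing of the
  \<open>\<alpha>\<close>-weight vector \<open>Z1 + i Z2\<close> with \<open>[u' + i e u, v' + i d v]\<close>, a weight vector for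
  \<open>e \<nu> + d \<mu>\<close>; skewness of \<open>ad t\<close> makes the pairing vanish unless the weights agree.\<close>

lemma weight_bracket_pairing:
  assumes Z: "(Z1, Z2) \<in> weight_space br t \<alpha> V"
    and u: "(u', u) \<in> weight_space br t \<nu> V'" and v: "(v', v) \<in> weight_space br t \<mu> V''"
    and Y: "Y \<in> t" and e: "e = 1 \<or> e = -1" and d: "d = 1 \<or> d = -1"
  shows "(\<alpha> Y - e * \<nu> Y - d * \<mu> Y) *
    (inner_theta Z1 (br u v) - e * inner_theta Z2 (br u' v) - d * inner_theta Z2 (br u v')
      - e * d * inner_theta Z1 (br u' v')) = 0"
proof -
  have Z_Y: "br Y Z1 = - (\<alpha> Y *\<^sub>R Z2)" "br Y Z2 = \<alpha> Y *\<^sub>R Z1"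
    and u_Y: "br Y u' = - (\<nu> Y *\<^sub>R u)" "br Y u = \<nu> Y *\<^sub>R u'"
    and v_Y: "br Y v' = - (\<mu> Y *\<^sub>R v)" "br Y v = \<mu> Y *\<^sub>R v'"
    using Z u v Y unfolding weight_space_def by auto
  have Z1_Y: "inner_theta Z1 (br Y x) = \<alpha> Y * inner_theta Z2 x" for x
    using inner_theta_t_skew[OF Y, of Z1 x] Z_Y by (simp add: inner_theta_algebra)
  have Z2_Y: "inner_theta Z2 (br Y x) = - \<alpha> Y * inner_theta Z1 x" for x
    using inner_theta_t_skew[OF Y, of Z2 x] Z_Y by (simp add: inner_theta_algebra)
  have brackets:
    "br Y (br u v) = \<nu> Y *\<^sub>R br u' v + \<mu> Y *\<^sub>R br u v'"
    "br Y (br u' v) = - (\<nu> Y *\<^sub>R br u v) + \<mu> Y *\<^sub>R br u' v'"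
    "br Y (br u v') = \<nu> Y *\<^sub>R br u' v' - \<mu> Y *\<^sub>R br u v"
    "br Y (br u' v') = - (\<nu> Y *\<^sub>R br u v') - \<mu> Y *\<^sub>R br u' v"
    using u_Y v_Y by (simp_all add: bracket_derivation bracket_algebra)
  define a1 where "a1 = inner_theta Z1 (br u v)"
  define a2 where "a2 = inner_theta Z1 (br u' v)"
  define a3 where "a3 = inner_theta Z1 (br u v')"
  define a4 where "a4 = inner_theta Z1 (br u' v')"
  define b1 where "b1 = inner_theta Z2 (br u v)"
  define b2 where "b2 = inner_theta Z2 (br u' v)"
  define b3 where "b3 = inner_theta Z2 (br u v')"
  define b4 where "b4 = inner_theta Z2 (br u' v')"
  note defs = a1_def a2_def a3_def a4_def b1_def b2_def b3_def b4_def
  have "\<alpha> Y * b1 = \<nu> Y * a2 + \<mu> Y * a3" "\<alpha> Y * b2 = - \<nu> Y * a1 + \<mu> Y * a4"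
    "\<alpha> Y * b3 = \<nu> Y * a4 - \<mu> Y * a1" "\<alpha> Y * b4 = - \<nu> Y * a3 - \<mu> Y * a2"
    unfolding defs Z1_Y[symmetric] brackets by (simp_all add: inner_theta_algebra)
  moreover have "- \<alpha> Y * a1 = \<nu> Y * b2 + \<mu> Y * b3" "- \<alpha> Y * a2 = - \<nu> Y * b1 + \<mu> Y * b4"
    "- \<alpha> Y * a3 = \<nu> Y * b4 - \<mu> Y * b1" "- \<alpha> Y * a4 = - \<nu> Y * b3 - \<mu> Y * b2"
    unfolding defs Z2_Y[symmetric] brackets by (simp_all add: inner_theta_algebra)
  ultimately show ?thesis
    unfolding defs[symmetric] using e d by (rule rotation_relations_factor)
qed

lemma exists_m_weight_vectors_pairing:
  assumes "Z \<in> derived br (minus_eig \<theta>)" "Z \<noteq> 0"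
  obtains u v where "m_weight_vector u" "m_weight_vector v" "inner_theta Z (br u v) \<noteq> 0"
proof -
  let ?G = "{br u v |u v. u \<in> {u. m_weight_vector u} \<and> v \<in> {u. m_weight_vector u}}"
  have "Z \<in> span ?G"
    using derived_subset_derived[OF minus_eig_subset_span_m_weight_vectors] assms(1)
    unfolding derived_def by blast
  moreover have "linear (inner_theta Z)" using inner_theta_bilinear by (simp add: bilinear_def)
  moreover have "inner_theta Z Z \<noteq> 0" using inner_theta_pos[OF assms(2)] by simp
  ultimately have "\<exists>g\<in>?G. inner_theta Z g \<noteq> 0" using linear_eq_0_on_span by blast
  then show ?thesis using that by blast
qed

lemma plus_eig_weight_decomposition:
  assumes k_derived: "plus_eig \<theta> \<subseteq> derived br (minus_eig \<theta>)"
    and Z: "(Z1, Z2) \<in> weight_space br t \<alpha> (plus_eig \<theta>)" "Z1 \<noteq> 0"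
  shows "\<exists>\<beta> \<gamma> :: 'a \<Rightarrow> real. linear \<beta> \<and> linear \<gamma> \<and>
           (\<forall>Y\<in>t. \<alpha> Y = \<beta> Y + \<gamma> Y) \<and>
           (is_root br t \<beta> (minus_eig \<theta>) \<or> (\<forall>Y\<in>t. \<beta> Y = 0)) \<and>
           (is_root br t \<gamma> (minus_eig \<theta>) \<or> (\<forall>Y\<in>t. \<gamma> Y = 0))"
proof -
  have "Z1 \<in> derived br (minus_eig \<theta>)" using Z k_derived unfolding weight_space_def by blast
  then obtain u v where "m_weight_vector u" "m_weight_vector v"
    and uv: "inner_theta Z1 (br u v) \<noteq> 0"
    using Z(2) by (rule exists_m_weight_vectors_pairing)
  then obtain \<nu> u' \<mu> v' where \<nu>: "linear \<nu>" "(u', u) \<in> weight_space br t \<nu> (minus_eig \<theta>)"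
    and \<mu>: "linear \<mu>" "(v', v) \<in> weight_space br t \<mu> (minus_eig \<theta>)"
    unfolding m_weight_vector_def by blast
  have "u \<noteq> 0" "v \<noteq> 0"
    using uv by (auto simp: bilinear_lzero[OF bracket_bilinear] bilinear_rzero[OF bracket_bilinear]
        bilinear_rzero[OF inner_theta_bilinear])
  obtain e d where ed: "e = 1 \<or> e = -1" "d = 1 \<or> d = -1"
    and pairing: "inner_theta Z1 (br u v) - e * inner_theta Z2 (br u' v)
      - d * inner_theta Z2 (br u v') - e * d * inner_theta Z1 (br u' v') \<noteq> 0"
    using exists_sign_combination_nonzero[OF uv] by blast
  show ?thesis
  proof (intro exI conjI)
    show "linear (\<lambda>Y. e * \<nu> Y)" "linear (\<lambda>Y. d * \<mu> Y)"
      using module_hom_scale[OF \<nu>(1), of e] module_hom_scale[OF \<mu>(1), of d] by simp_all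
    show "\<forall>Y\<in>t. \<alpha> Y = e * \<nu> Y + d * \<mu> Y"
    proof
      fix Y assume "Y \<in> t"
      show "\<alpha> Y = e * \<nu> Y + d * \<mu> Y"
        using weight_bracket_pairing[OF Z(1) \<nu>(2) \<mu>(2) \<open>Y \<in> t\<close> ed] pairing by simp
    qed
    show "is_root br t (\<lambda>Y. e * \<nu> Y) (minus_eig \<theta>) \<or> (\<forall>Y\<in>t. e * \<nu> Y = 0)"
      by (rule m_weight_vector_root[OF \<nu>(2) \<open>u \<noteq> 0\<close> ed(1)])
    show "is_root br t (\<lambda>Y. d * \<mu> Y) (minus_eig \<theta>) \<or> (\<forall>Y\<in>t. d * \<mu> Y = 0)"
      by (rule m_weight_vector_root[OF \<mu>(2) \<open>v \<noteq> 0\<close> ed(2)])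
  qed
qed

end

theorem lemma1:
  fixes br :: "'a::euclidean_space \<Rightarrow> 'a \<Rightarrow> 'a"
    and \<sigma> \<theta> :: "'a \<Rightarrow> 'a"
    and t :: "'a set"
    and \<alpha> :: "'a \<Rightarrow> real"
  assumes "semisimple br"
    and "cartan_involution br \<theta>"
    and "lie_involution br \<sigma>"
    and "\<forall>x. \<sigma> (\<theta> x) = \<theta> (\<sigma> x)"
    and "\<not> compact_lie br"
    and "\<forall>I. lie_ideal br I \<and> \<sigma> ` I \<subseteq> I \<longrightarrow> I = {0} \<or> I = UNIV"
    and "max_abelian_subspace br t (plus_eig \<theta> \<inter> minus_eig \<sigma>)"
    and "linear \<alpha>"
    and "is_root br t \<alpha> UNIV"
    and "\<exists>X\<in>weight_space br t \<alpha> (plus_eig \<theta>). X \<noteq> (0, 0)"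
  shows "\<exists>\<beta> \<gamma> :: 'a \<Rightarrow> real. linear \<beta> \<and> linear \<gamma> \<and>
           (\<forall>Y\<in>t. \<alpha> Y = \<beta> Y + \<gamma> Y) \<and>
           (is_root br t \<beta> (minus_eig \<theta>) \<or> (\<forall>Y\<in>t. \<beta> Y = 0)) \<and>
           (is_root br t \<gamma> (minus_eig \<theta>) \<or> (\<forall>Y\<in>t. \<gamma> Y = 0))"
proof -
  interpret cartan_torus br \<theta> t
    using assms(1,2,7) unfolding semisimple_def max_abelian_subspace_def
    by unfold_locales blast+
  obtain Z1 Z2 where "(Z1, Z2) \<in> weight_space br t \<alpha> (plus_eig \<theta>)" "Z1 \<noteq> 0"
    using assms(10)
      weight_space_obtain_first_nonzero[OF bracket_bilinear subspace_plus_eig[OF theta_linear]]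
    by blast
  then show ?thesis
    using plus_eig_weight_decomposition plus_eig_subset_derived_minus_eig[OF assms(3-6)] by blast
qed

end
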